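(* Fix $\varepsilon\in\{1,-1\}$, $m\in\{1,2,5,7,8,10,11,13,14,16,17,19,22,23\}$, and a nonnegative integer $n$ such that $\delta_m(n)$ is squarefree. With $A=18(m+24n)-\varepsilon$, $B=4\varepsilon/9$, $D=-3$, $r=1/3+A^2$, the number $J(m,n)=\frac{1}{64}(B^2D+2ABDr+A^2Dr^2+r^3)$ is an integer.
   Context: Let $f_m(n)=62208n^2+(5184m-432\varepsilon)n+(108m^2-18\varepsilon m+1)$, let $i=1$ if $m$ is odd, $i=2$ if $m$ is even and $m\ne8,16$, and $i=4$ if $m\in\{8,16\}$, and let $\delta_m(n)=2^{1-i}(m+24n)f_m(n)$. *)

theory Defs
  imports Complex_Main "HOL-Computational_Algebra.Squarefree"
begin

definition f_m :: "int \<Rightarrow> int \<Rightarrow> int \<Rightarrow> int" where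
  "f_m \<epsilon> m n = 62208 * n^2 + (5184 * m - 432 * \<epsilon>) * n + (108 * m^2 - 18 * \<epsilon> * m + 1)"

definition i_m :: "int \<Rightarrow> nat" where
  "i_m m = (if odd m then 1 else if m = 8 \<or> m = 16 then 4 else 2)"

(* delta_m(n) = 2^(1-i) (m+24n) f_m(n); for the admissible m this division is exact *)
definition delta_m :: "int \<Rightarrow> int \<Rightarrow> int \<Rightarrow> int" where
  "delta_m \<epsilon> m n = ((m + 24 * n) * f_m \<epsilon> m n) div 2 ^ (i_m m - 1)"

definition J_mn :: "int \<Rightarrow> int \<Rightarrow> int \<Rightarrow> rat" where
  "J_mn \<epsilon> m n =
    (let A = of_int (18 * (m + 24 * n) - \<epsilon>) :: rat;
         B = 4 * of_int \<epsilon> / 9 :: rat;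
         D = -3 :: rat;
         r = 1/3 + A^2
     in (B^2 * D + 2 * A * B * D * r + A^2 * D * r^2 + r^3) / 64)"

end

theory Submission
  imports Defs
begin

text \<open>With \<open>k = m + 24 n\<close> and \<open>\<epsilon>\<^sup>2 = 1\<close>, expanding \<open>J\<close> gives an integer polynomial in \<open>k\<close> and \<open>\<epsilon>\<close>
  plus \<open>(k (k + \<epsilon>))\<^sup>2 / 4\<close>; since \<open>\<epsilon>\<close> is odd, \<open>k (k + \<epsilon>)\<close> is even, so \<open>J\<close> is an integer.\<close>

lemma J_mn_eq_poly:
  fixes \<epsilon> m n :: int
  assumes "\<epsilon>\<^sup>2 = 1"
  defines "k \<equiv> m + 24 * n"
  shows "J_mn \<epsilon> m n =
    of_int (2 * \<epsilon> * k - 142 * k^2 + 3766 * \<epsilon> * k^3 - 50848 * k^4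
            + 354294 * \<epsilon> * k^5 - 1062882 * k^6)
    + of_int ((k * (k + \<epsilon>))\<^sup>2) / 4"
proof -
  have "(of_int \<epsilon> :: rat)\<^sup>2 = 1"
    using assms(1) by (metis of_int_1 of_int_power)
  then show ?thesis
    unfolding J_mn_def Let_def k_def by (simp add: field_simps) algebra
qed

lemma J_mn_Ints:
  fixes \<epsilon> m n :: int
  assumes "\<epsilon>\<^sup>2 = 1"
  shows "J_mn \<epsilon> m n \<in> \<int>"
proof -
  define k where "k = m + 24 * n"
  have "odd \<epsilon>"
    using assms by (auto simp: power2_eq_1_iff)
  then have "even (k * (k + \<epsilon>))"
    by auto
  then obtain t where t: "k * (k + \<epsilon>) = 2 * t"
    by blast
  have "of_int ((k * (k + \<epsilon>))\<^sup>2) / 4 = (of_int (t\<^sup>2) :: rat)"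
    by (simp add: t power_mult_distrib)
  then show ?thesis
    using J_mn_eq_poly[OF assms, of m n] by (simp add: k_def)
qed

theorem lemma3p2:
  fixes \<epsilon> m n :: int
  assumes "\<epsilon> \<in> {1, -1}"
    and "m \<in> {1,2,5,7,8,10,11,13,14,16,17,19,22,23}"
    and "n \<ge> 0"
    and "squarefree (delta_m \<epsilon> m n)"
  shows "J_mn \<epsilon> m n \<in> \<int>"
proof -
  from assms(1) have "\<epsilon>\<^sup>2 = 1" by auto
  then show ?thesis by (rule J_mn_Ints)
qed

end
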